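(* Let $\mathcal{A}\subseteq C^0([0,1])$ be a subalgebra which is closed with respect to uniform convergence and contains a non-constant function, and let $x_0\in(0,1)$. Then $\mathcal{A}$ contains a non-constant function $f$ which is differentiable at $x_0$.
   Context: $C^0([0,1])$ denotes the algebra of continuous real-valued functions on $[0,1]$ with the supremum norm; the subalgebra is not assumed to contain the constants. *)

theory Defs
  imports "HOL-Analysis.Analysis"
begin

text \<open>Elements of C^0([0,1]) are represented canonically as functions
  real => real that are continuous on [0,1] and vanish outside [0,1].\<close>
definition C01 :: "(real \<Rightarrow> real) set" where
  "C01 = {f. continuous_on {0..1} f \<and> (\<forall>x. x \<notin> {0..1} \<longrightarrow> f x = 0)}"

text \<open>A (real) subalgebra of C^0([0,1]); constants need not belong to it.\<close>
definition subalgebra_C01 :: "(real \<Rightarrow> real) set \<Rightarrow> bool" where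
  "subalgebra_C01 A \<longleftrightarrow> A \<subseteq> C01 \<and> (\<lambda>x. 0) \<in> A \<and>
     (\<forall>f\<in>A. \<forall>g\<in>A. (\<lambda>x. f x + g x) \<in> A) \<and>
     (\<forall>c. \<forall>f\<in>A. (\<lambda>x. c * f x) \<in> A) \<and>
     (\<forall>f\<in>A. \<forall>g\<in>A. (\<lambda>x. f x * g x) \<in> A)"

text \<open>Closed under uniform convergence on [0,1] (for functions in C01,
  uniform convergence on UNIV is the same as on [0,1] plus vanishing outside).\<close>
definition uniformly_closed :: "(real \<Rightarrow> real) set \<Rightarrow> bool" where
  "uniformly_closed A \<longleftrightarrow>
     (\<forall>F g. (\<forall>n. F n \<in> A) \<and> uniform_limit UNIV F g sequentially \<longrightarrow> g \<in> A)"

definition nonconstant_01 :: "(real \<Rightarrow> real) \<Rightarrow> bool" where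
  "nonconstant_01 f \<longleftrightarrow> (\<exists>x\<in>{0..1}. \<exists>y\<in>{0..1}. f x \<noteq> f y)"

end

theory Submission
  imports Defs
begin

text \<open>Take g \<in> A nonconstant. For every continuous h with h 0 = 0, the function h \<circ> g
  lies in A: by Stone-Weierstrass h is a uniform limit of polynomials on the range of g,
  the polynomials p - p 0 applied to g lie in A, and A is uniformly closed. Choosing h
  constant on a neighbourhood of g x0 but not on the whole range of g makes h \<circ> g
  locally constant near x0, hence differentiable there, and still nonconstant.\<close>

lemma subalgebra_C01_poly_comp:
  assumes A: "subalgebra_C01 A" and g: "g \<in> A"
    and p: "real_polynomial_function p"
  shows "(\<lambda>x. p (g x) - p 0) \<in> A"
  using p
proof (induct p)
  case (linear f)
  then obtain c where "f = (\<lambda>x. x * c)" by (auto simp: real_bounded_linear)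
  with A g show ?case by (simp add: subalgebra_C01_def mult.commute)
next
  case (const c)
  with A show ?case by (simp add: subalgebra_C01_def)
next
  case (add f1 f2)
  with A have "(\<lambda>x. (f1 (g x) - f1 0) + (f2 (g x) - f2 0)) \<in> A"
    by (simp add: subalgebra_C01_def)
  then show ?case by (simp add: algebra_simps)
next
  case (mult f1 f2)
  define F1 where "F1 = (\<lambda>x. f1 (g x) - f1 0)"
  define F2 where "F2 = (\<lambda>x. f2 (g x) - f2 0)"
  have "F1 \<in> A" "F2 \<in> A" using mult by (simp_all add: F1_def F2_def)
  with A have "(\<lambda>x. (F1 x * F2 x + f2 0 * F1 x) + f1 0 * F2 x) \<in> A"
    by (simp add: subalgebra_C01_def)
  moreover have "(\<lambda>x. (F1 x * F2 x + f2 0 * F1 x) + f1 0 * F2 x)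
      = (\<lambda>x. f1 (g x) * f2 (g x) - f1 0 * f2 0)"
    by (auto simp: F1_def F2_def algebra_simps)
  ultimately show ?case by simp
qed

lemma uniformly_closed_approx:
  assumes closed: "uniformly_closed A"
    and approx: "\<And>e. e > 0 \<Longrightarrow> \<exists>f\<in>A. \<forall>x. \<bar>f x - g x\<bar> < e"
  shows "g \<in> A"
proof -
  have "\<forall>n::nat. \<exists>f\<in>A. \<forall>x. \<bar>f x - g x\<bar> < 1 / Suc n"
    using approx by simp
  then obtain F where F: "\<And>n. F n \<in> A" "\<And>n x. \<bar>F n x - g x\<bar> < 1 / Suc n"
    by metis
  have "uniform_limit UNIV F g sequentially"
  proof (rule uniform_limitI)
    fix e :: real assume "e > 0"
    then obtain N :: nat where N: "1 / Suc N < e"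
      using nat_approx_posE by blast
    show "\<forall>\<^sub>F n in sequentially. \<forall>x\<in>UNIV. dist (F n x) (g x) < e"
    proof (rule eventually_sequentiallyI[of N])
      fix n assume "N \<le> n"
      then have "1 / Suc n \<le> 1 / Suc N"
        by (simp add: frac_le)
      with N F(2) show "\<forall>x\<in>UNIV. dist (F n x) (g x) < e"
        by (smt (verit) dist_real_def)
    qed
  qed
  with closed F(1) show ?thesis
    unfolding uniformly_closed_def by blast
qed

lemma subalgebra_C01_continuous_comp:
  assumes A: "subalgebra_C01 A" and closed: "uniformly_closed A" and g: "g \<in> A"
    and h: "continuous_on (insert 0 (g ` {0..1})) h" and h0: "h 0 = 0"
  shows "(\<lambda>x. h (g x)) \<in> A"
proof (rule uniformly_closed_approx[OF closed])
  fix e :: real assume "e > 0"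
  define S where "S = insert 0 (g ` {0..1})"
  have "continuous_on {0..1} g" and g_out: "\<And>x. x \<notin> {0..1} \<Longrightarrow> g x = 0"
    using g A unfolding subalgebra_C01_def C01_def by auto
  then have "compact S"
    unfolding S_def by (intro compact_insert compact_continuous_image) auto
  then obtain p where p: "real_polynomial_function p" "\<And>t. t \<in> S \<Longrightarrow> \<bar>h t - p t\<bar> < e / 2"
    using Stone_Weierstrass_real_polynomial_function h \<open>e > 0\<close>
    unfolding S_def by (metis half_gt_zero)
  have gS: "g x \<in> S" for x
    using g_out by (cases "x \<in> {0..1}") (auto simp: S_def)
  have "\<bar>(p (g x) - p 0) - h (g x)\<bar> < e" for x
    using p(2)[OF gS, of x] p(2)[of 0] h0 by (simp add: S_def) (smt (verit))
  with subalgebra_C01_poly_comp[OF A g p(1)]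
  show "\<exists>f\<in>A. \<forall>x. \<bar>f x - h (g x)\<bar> < e" by (intro bexI) auto
qed

lemma has_derivative_comp_locally_constant:
  fixes g :: "real \<Rightarrow> real" and h :: "real \<Rightarrow> 'a::real_normed_vector"
  assumes "isCont g x0" and "r > 0" and h: "\<And>t. dist t (g x0) < r \<Longrightarrow> h t = h (g x0)"
  shows "((\<lambda>x. h (g x)) has_derivative (\<lambda>_. 0)) (at x0)"
proof -
  obtain d where "d > 0" and d: "\<And>x. dist x x0 < d \<Longrightarrow> dist (g x) (g x0) < r"
    using assms(1,2) unfolding continuous_at_eps_delta by blast
  show ?thesis
    by (rule has_derivative_transform_within[OF has_derivative_const \<open>d > 0\<close>])
      (use d h in auto)
qed

theorem mainTheorem5:
  fixes A :: "(real \<Rightarrow> real) set" and x0 :: real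
  assumes "subalgebra_C01 A"
    and "uniformly_closed A"
    and "\<exists>f\<in>A. nonconstant_01 f"
    and "x0 \<in> {0<..<1}"
  shows "\<exists>f\<in>A. nonconstant_01 f \<and> f differentiable (at x0)"
proof -
  obtain g where g: "g \<in> A" "nonconstant_01 g" using assms(3) by blast
  then obtain y where y: "y \<in> {0..1}" "g y \<noteq> g x0"
    unfolding nonconstant_01_def by metis
  have "continuous_on {0..1} g"
    using g assms(1) unfolding subalgebra_C01_def C01_def by auto
  then have "isCont g x0"
    using assms(4) by (simp add: continuous_on_interior)
  define r where "r = \<bar>g y - g x0\<bar> / 2"
  have "r > 0" using y(2) by (simp add: r_def)
  define h where "h t = max 0 (\<bar>t - g x0\<bar> - r) - max 0 (\<bar>g x0\<bar> - r)" for t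
  have "(\<lambda>x. h (g x)) \<in> A"
    by (rule subalgebra_C01_continuous_comp[OF assms(1,2) g(1)])
      (auto simp: h_def intro!: continuous_intros)
  moreover have "h (g y) - h (g x0) = r"
    using \<open>r > 0\<close> by (simp add: h_def r_def)
  then have "nonconstant_01 (\<lambda>x. h (g x))"
    using y assms(4) \<open>r > 0\<close> unfolding nonconstant_01_def
    by (metis diff_self greaterThanLessThan_iff atLeastAtMost_iff less_eq_real_def less_irrefl)
  moreover have "(\<lambda>x. h (g x)) differentiable (at x0)"
    using has_derivative_comp_locally_constant[OF \<open>isCont g x0\<close> \<open>r > 0\<close>, of h]
    unfolding differentiable_def by (auto simp: h_def dist_real_def)
  ultimately show ?thesis by blast
qed

end
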